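(* In the setting below, for each $\nu>0$ and $N\in\mathbb N$, $$\mathbb E\Big[\sup_{v\in V_0}\|g(Bv)-\hat g_N(Bv)\|_H\Big]=\mathbb E\Big[\sup_{w\in B(V_0)}\|g(w)-\hat g_N(w)\|_H\Big]\le 2L\nu+\frac{\sqrt3\,\tau_{\mathsf G}}{\sqrt N}\big(\mathcal N(\nu;B(V_0))\big)^{1/2}.$$
   Context: Let $(\Theta,\Sigma,\mu)$ be a complete probability space, $\boldsymbol\zeta$ a $\Theta$-valued random element, and $\boldsymbol\zeta^1,\boldsymbol\zeta^2,\ldots$ independent $\Theta$-valued random elements on a complete probability space, each distributed as $\boldsymbol\zeta$. Let $V$ be a reflexive Banach space, $V_0\subset V$ nonempty, closed, bounded and convex, $W$ a Banach space, and $B:V\to W$ linear and compact. Let $H$ be a separable Hilbert space and $\mathsf G:B(V_0)\times\Theta\to H$ a Carathéodory function (continuous in the first argument, measurable in the second). Assume there is an integrable $L_{\mathsf G}:\Theta\to[0,\infty)$ such that $\mathsf G(\cdot,\zeta)$ is Lipschitz continuous on $B(V_0)$ (w.r.t. $\|\cdot\|_W$) with constant $L_{\mathsf G}(\zeta)$ for each $\zeta\in\Theta$, and there is $\tau_{\mathsf G}>0$ with $\mathbb E[\exp(\tau_{\mathsf G}^{-2}\|\mathsf G(w,\boldsymbol\zeta)-\mathbb E[\mathsf G(w,\boldsymbol\zeta)]\|_H^2)]\le e$ for all $w\in B(V_0)$. Define $g(w)=\mathbb E[\mathsf G(w,\boldsymbol\zeta)]$, $\hat g_N(w)=\frac1N\sum_{i=1}^N\mathsf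 G(w,\boldsymbol\zeta^i)$, and $L=\mathbb E[L_{\mathsf G}(\boldsymbol\zeta)]$. For $\nu>0$, $\mathcal N(\nu;B(V_0))$ denotes the minimal number of points in a $\nu$-net (in $\|\cdot\|_W$) of the set $B(V_0)$. *)

theory Defs
  imports "HOL-Analysis.Analysis" "HOL-Probability.Probability"
begin

definition reflexive_space :: "'v::banach itself \<Rightarrow> bool" where
  "reflexive_space _ \<longleftrightarrow>
     (\<forall>\<phi> :: ('v \<Rightarrow>\<^sub>L real) \<Rightarrow>\<^sub>L real. \<exists>v::'v. \<forall>f. blinfun_apply \<phi> f = blinfun_apply f v)"

definition compact_linear_op :: "('v::real_normed_vector \<Rightarrow> 'w::real_normed_vector) \<Rightarrow> bool" where
  "compact_linear_op B \<longleftrightarrow> bounded_linear B \<and> compact (closure (B ` cball 0 1))"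

definition covering_number :: "real \<Rightarrow> 'a::metric_space set \<Rightarrow> nat" where
  "covering_number \<nu> S =
     (LEAST n. \<exists>C. C \<subseteq> S \<and> finite C \<and> card C = n \<and> S \<subseteq> (\<Union>c\<in>C. cball c \<nu>))"

end

theory Submission
  imports Defs
begin

text \<open>Fix a minimal \<open>\<nu>\<close>-net \<open>C\<close> of \<open>B ` V0\<close>. If \<open>w\<close> lies within \<open>\<nu>\<close> of \<open>c \<in> C\<close>, the triangle
  inequality bounds \<open>\<parallel>g w - g\<^sub>N w\<parallel>\<close> by \<open>\<parallel>g w - g c\<parallel> \<le> L \<nu>\<close>, by \<open>\<parallel>g\<^sub>N c - g\<^sub>N w\<parallel>\<close>, which is at most
  \<open>\<nu>\<close> times the empirical mean of the Lipschitz constants and so has expectation \<open>L \<nu>\<close>, and by the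
  deviation \<open>X\<^sub>c = \<parallel>g c - g\<^sub>N c\<parallel>\<close> at a net point. Independence makes the summands of \<open>g\<^sub>N c - g c\<close>
  orthogonal, so \<open>E X\<^sub>c\<^sup>2\<close> is the variance over \<open>N\<close>, and the sub-Gaussian bound gives variance
  \<open>\<le> e \<tau>\<^sup>2 \<le> 3 \<tau>\<^sup>2\<close>. Finally \<open>X\<^sub>c \<le> (\<Sum>\<^sub>d\<^sub>\<in>\<^sub>C X\<^sub>d\<^sup>2 + s\<^sup>2) / (2 s)\<close> with \<open>s = \<surd>(3 |C| / N) \<tau>\<close> gives
  \<open>E max\<^sub>c X\<^sub>c \<le> s\<close>. As \<open>L\<^sub>G\<close> need not be measurable, it is first replaced by the supremum of the
  difference quotients of \<open>G\<close> over a countable dense subset of \<open>B ` V0\<close>.\<close>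

section \<open>Nets in sets with compact closure\<close>

lemma compact_closure_image_compact_linear_op:
  assumes "compact_linear_op B" "bounded V"
  shows "compact (closure (B ` V))"
proof -
  have lin: "bounded_linear B" and cpt: "compact (closure (B ` cball 0 1))"
    using assms(1) unfolding compact_linear_op_def by auto
  obtain R where R: "R > 0" "\<And>v. v \<in> V \<Longrightarrow> norm v \<le> R"
    using assms(2) unfolding bounded_pos by blast
  define T where "T = (\<lambda>x. R *\<^sub>R x) ` closure (B ` cball 0 1)"
  have T: "compact T"
    unfolding T_def using cpt by (rule compact_scaling)
  have "B ` V \<subseteq> T"
  proof
    fix y assume "y \<in> B ` V"
    then obtain v where v: "v \<in> V" "y = B v" by blast
    have "norm ((1 / R) *\<^sub>R v) \<le> 1"
      using R v(1) by (simp add: field_simps)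
    then have "(1 / R) *\<^sub>R v \<in> cball 0 1" by simp
    then have "B ((1 / R) *\<^sub>R v) \<in> closure (B ` cball 0 1)"
      by (intro closure_subset[THEN subsetD] imageI)
    moreover have "y = R *\<^sub>R B ((1 / R) *\<^sub>R v)"
      using v(2) R(1) by (simp add: linear_cmul[OF bounded_linear.linear[OF lin]])
    ultimately show "y \<in> T" unfolding T_def by (rule image_eqI[rotated])
  qed
  then have "closure (B ` V) \<subseteq> T"
    using T by (simp add: closure_minimal compact_imp_closed)
  then show ?thesis
    using compact_Int_closed[OF T closed_closure[of "B ` V"]] by (simp add: Int_absorb1)
qed

lemma finite_ball_net_of_compact_closure:
  fixes S :: "'a::metric_space set"
  assumes "compact (closure S)" "e > 0"
  obtains C where "finite C" "C \<subseteq> S" "S \<subseteq> (\<Union>c\<in>C. ball c e)"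
proof -
  have "Met_TC.mtotally_bounded S"
    using assms(1) by (intro Met_TC.compact_closure_of_imp_mtotally_bounded)
      (simp_all add: euclidean_closure_of compactin_euclidean_iff)
  then show ?thesis
    using assms(2) that unfolding Met_TC.mtotally_bounded_def by auto
qed

lemma covering_net_of_compact_closure:
  fixes S :: "'a::metric_space set"
  assumes "compact (closure S)" "\<nu> > 0"
  obtains C where "finite C" "C \<subseteq> S" "card C = covering_number \<nu> S"
    "S \<subseteq> (\<Union>c\<in>C. cball c \<nu>)"
proof -
  obtain C0 where C0: "finite C0" "C0 \<subseteq> S" "S \<subseteq> (\<Union>c\<in>C0. ball c \<nu>)"
    using finite_ball_net_of_compact_closure[OF assms] .
  have "S \<subseteq> (\<Union>c\<in>C0. cball c \<nu>)"
    using C0(3) by (rule order_trans) (intro UN_mono order_refl ball_subset_cball)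
  then have "\<exists>n C. C \<subseteq> S \<and> finite C \<and> card C = n \<and> S \<subseteq> (\<Union>c\<in>C. cball c \<nu>)"
    using C0(1,2) by blast
  then have "\<exists>C. C \<subseteq> S \<and> finite C \<and> card C = covering_number \<nu> S \<and> S \<subseteq> (\<Union>c\<in>C. cball c \<nu>)"
    unfolding covering_number_def by (rule LeastI_ex)
  then show ?thesis using that by blast
qed

lemma countable_dense_subset_of_compact_closure:
  fixes S :: "'a::metric_space set"
  assumes "compact (closure S)"
  obtains D where "countable D" "D \<subseteq> S" "S \<subseteq> closure D"
proof -
  have "\<exists>C. finite C \<and> C \<subseteq> S \<and> S \<subseteq> (\<Union>c\<in>C. ball c (inverse (Suc n)))" for n
    by (rule finite_ball_net_of_compact_closure[OF assms]) auto
  then obtain net where net: "\<And>n. finite (net n)" "\<And>n. net n \<subseteq> S"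
    "\<And>n. S \<subseteq> (\<Union>c\<in>net n. ball c (inverse (Suc n)))"
    by metis
  show ?thesis
  proof
    show "countable (\<Union>n. net n)" using net(1) by (simp add: countable_finite)
    show "(\<Union>n. net n) \<subseteq> S" using net(2) by blast
    show "S \<subseteq> closure (\<Union>n. net n)"
    proof (clarsimp simp: closure_approachable)
      fix x and e :: real
      assume "x \<in> S" "0 < e"
      obtain n where n: "inverse (Suc n) < e"
        using \<open>0 < e\<close> reals_Archimedean by blast
      obtain c where "c \<in> net n" "dist c x < inverse (Suc n)"
        using net(3)[of n] \<open>x \<in> S\<close> by auto
      then show "\<exists>n. \<exists>c\<in>net n. dist c x < e"
        using n by force
    qed
  qed
qed

section \<open>Lipschitz functions\<close>

lemma lipschitz_on_dense_subset:
  fixes f :: "'a::metric_space \<Rightarrow> 'b::metric_space"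
  assumes lip: "C-lipschitz_on D f" and cont: "continuous_on S f"
    and D: "D \<subseteq> S" "S \<subseteq> closure D"
  shows "C-lipschitz_on S f"
proof (rule lipschitz_onI)
  show "0 \<le> C" using lipschitz_on_nonneg[OF lip] .
  have approx: "\<exists>u. (\<forall>n. u n \<in> D) \<and> u \<longlonglongrightarrow> x \<and> (\<lambda>n. f (u n)) \<longlonglongrightarrow> f x" if "x \<in> S" for x
  proof -
    have "x \<in> closure D" using D(2) that by blast
    then obtain u where u: "\<And>n. u n \<in> D" "u \<longlonglongrightarrow> x"
      unfolding closure_sequential by blast
    have "(\<lambda>n. f (u n)) \<longlonglongrightarrow> f x"
      using u D(1) by (intro continuous_on_tendsto_compose[OF cont u(2) \<open>x \<in> S\<close>] always_eventually) auto
    then show ?thesis using u by blast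
  qed
  fix x y assume "x \<in> S" "y \<in> S"
  obtain u where u: "\<And>n. u n \<in> D" "u \<longlonglongrightarrow> x" "(\<lambda>n. f (u n)) \<longlonglongrightarrow> f x"
    using approx[OF \<open>x \<in> S\<close>] by blast
  obtain v where v: "\<And>n. v n \<in> D" "v \<longlonglongrightarrow> y" "(\<lambda>n. f (v n)) \<longlonglongrightarrow> f y"
    using approx[OF \<open>y \<in> S\<close>] by blast
  have "(\<lambda>n. dist (f (u n)) (f (v n))) \<longlonglongrightarrow> dist (f x) (f y)"
    by (intro tendsto_intros u(3) v(3))
  moreover have "(\<lambda>n. C * dist (u n) (v n)) \<longlonglongrightarrow> C * dist x y"
    by (intro tendsto_intros u(2) v(2))
  ultimately show "dist (f x) (f y) \<le> C * dist x y"
    by (rule LIMSEQ_le) (use lipschitz_onD[OF lip u(1) v(1)] in blast)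
qed

lemma lipschitz_on_sum:
  fixes f :: "'i \<Rightarrow> 'a::metric_space \<Rightarrow> 'b::real_normed_vector"
  assumes "\<And>i. i \<in> I \<Longrightarrow> (C i)-lipschitz_on U (f i)"
  shows "(\<Sum>i\<in>I. C i)-lipschitz_on U (\<lambda>x. \<Sum>i\<in>I. f i x)"
  using assms
proof (induction I rule: infinite_finite_induct)
  case (insert i I)
  then show ?case by (simp add: lipschitz_on_add)
qed (simp_all add: lipschitz_on_constant)

lemma dist_le_lipschitz_on_net:
  assumes g: "L-lipschitz_on S g" and h: "K-lipschitz_on S h"
    and "w \<in> S" "c \<in> S" "dist c w \<le> \<nu>"
  shows "dist (g w) (h w) \<le> L * \<nu> + K * \<nu> + dist (g c) (h c)"
proof -
  have "dist (g w) (h w) \<le> dist (g w) (g c) + dist (g c) (h c) + dist (h c) (h w)"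
    using dist_triangle[of "g w" "h w" "g c"] dist_triangle[of "g c" "h w" "h c"] by linarith
  moreover have "dist (g w) (g c) \<le> L * \<nu>"
    using lipschitz_onD[OF g \<open>w \<in> S\<close> \<open>c \<in> S\<close>] lipschitz_on_nonneg[OF g] assms(5)
    by (smt (verit) dist_commute mult_left_mono)
  moreover have "dist (h c) (h w) \<le> K * \<nu>"
    using lipschitz_onD[OF h \<open>c \<in> S\<close> \<open>w \<in> S\<close>] lipschitz_on_nonneg[OF h] assms(5)
    by (smt (verit) mult_left_mono)
  ultimately show ?thesis by linarith
qed

lemma measurable_lipschitz_modulus:
  fixes G :: "'w::metric_space \<Rightarrow> 't \<Rightarrow> 'h::{metric_space, second_countable_topology}"
  assumes S: "compact (closure S)"
    and cont: "\<And>\<theta>. \<theta> \<in> space M \<Longrightarrow> continuous_on S (\<lambda>w. G w \<theta>)"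
    and meas: "\<And>w. w \<in> S \<Longrightarrow> G w \<in> borel_measurable M"
    and lip: "\<And>\<theta>. \<theta> \<in> space M \<Longrightarrow> (L \<theta>)-lipschitz_on S (\<lambda>w. G w \<theta>)"
  obtains K where "K \<in> borel_measurable M" "\<And>\<theta>. \<theta> \<in> space M \<Longrightarrow> K \<theta> \<le> L \<theta>"
    "\<And>\<theta>. \<theta> \<in> space M \<Longrightarrow> (K \<theta>)-lipschitz_on S (\<lambda>w. G w \<theta>)"
proof -
  obtain D where D: "countable D" "D \<subseteq> S" "S \<subseteq> closure D"
    using countable_dense_subset_of_compact_closure[OF S] .
  define ratio where "ratio \<theta> p = dist (G (fst p) \<theta>) (G (snd p) \<theta>) / dist (fst p) (snd p)"
    for \<theta> p
  define K' where "K' \<theta> = (SUP p\<in>D \<times> D. ennreal (ratio \<theta> p))" for \<theta>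
  have "K' \<in> borel_measurable M"
    unfolding K'_def
  proof (rule borel_measurable_SUP)
    show "countable (D \<times> D)" using D(1) by simp
    fix p assume "p \<in> D \<times> D"
    then have [measurable]: "G (fst p) \<in> borel_measurable M" "G (snd p) \<in> borel_measurable M"
      using D(2) meas by auto
    show "(\<lambda>\<theta>. ennreal (ratio \<theta> p)) \<in> borel_measurable M"
      unfolding ratio_def by measurable
  qed
  moreover have K'_le: "K' \<theta> \<le> ennreal (L \<theta>)" if "\<theta> \<in> space M" for \<theta>
    unfolding K'_def
  proof (rule SUP_least, rule ennreal_leI)
    fix p assume "p \<in> D \<times> D"
    then have "dist (G (fst p) \<theta>) (G (snd p) \<theta>) \<le> L \<theta> * dist (fst p) (snd p)"
      using D(2) by (intro lipschitz_onD[OF lip[OF that]]) auto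
    then show "ratio \<theta> p \<le> L \<theta>"
      using lipschitz_on_nonneg[OF lip[OF that]]
      unfolding ratio_def by (cases "fst p = snd p") (simp_all add: divide_le_eq)
  qed
  moreover have "(enn2real (K' \<theta>))-lipschitz_on S (\<lambda>w. G w \<theta>)" if "\<theta> \<in> space M" for \<theta>
  proof (rule lipschitz_on_dense_subset[OF _ cont[OF that] D(2,3)], rule lipschitz_onI)
    have "K' \<theta> < top"
      using K'_le[OF that] ennreal_less_top by (rule le_less_trans)
    then have K': "K' \<theta> = ennreal (enn2real (K' \<theta>))" by simp
    fix a b assume "a \<in> D" "b \<in> D"
    then have "ennreal (ratio \<theta> (a, b)) \<le> K' \<theta>"
      unfolding K'_def by (intro SUP_upper) auto
    then have "ratio \<theta> (a, b) \<le> enn2real (K' \<theta>)"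
      by (subst (asm) K') simp
    then show "dist (G a \<theta>) (G b \<theta>) \<le> enn2real (K' \<theta>) * dist a b"
      unfolding ratio_def by (cases "a = b") (simp_all add: divide_le_eq)
  qed simp
  ultimately show ?thesis
    using lipschitz_on_nonneg[OF lip]
    by (intro that[of "\<lambda>\<theta>. enn2real (K' \<theta>)"]) (auto intro: enn2real_leI)
qed

lemma lipschitz_on_integral:
  fixes G :: "'w::metric_space \<Rightarrow> 'a \<Rightarrow> 'b::{real_normed_vector, second_countable_topology}"
  assumes lip: "\<And>\<theta>. \<theta> \<in> space M \<Longrightarrow> (K \<theta>)-lipschitz_on S (\<lambda>w. G w \<theta>)"
    and K: "integrable M K" and G: "\<And>w. w \<in> S \<Longrightarrow> integrable M (G w)"
  shows "(\<integral>\<theta>. K \<theta> \<partial>M)-lipschitz_on S (\<lambda>w. \<integral>\<theta>. G w \<theta> \<partial>M)"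
proof (rule lipschitz_onI)
  have K_nonneg: "\<And>\<theta>. \<theta> \<in> space M \<Longrightarrow> 0 \<le> K \<theta>"
    using lipschitz_on_nonneg[OF lip] .
  then show "0 \<le> (\<integral>\<theta>. K \<theta> \<partial>M)" by (rule Bochner_Integration.integral_nonneg)
  fix w w' assume "w \<in> S" "w' \<in> S"
  have "ennreal (dist (\<integral>\<theta>. G w \<theta> \<partial>M) (\<integral>\<theta>. G w' \<theta> \<partial>M)) = ennreal (norm (\<integral>\<theta>. G w \<theta> - G w' \<theta> \<partial>M))"
    using G \<open>w \<in> S\<close> \<open>w' \<in> S\<close> by (simp add: dist_norm)
  also have "\<dots> \<le> (\<integral>\<^sup>+\<theta>. ennreal (norm (G w \<theta> - G w' \<theta>)) \<partial>M)"
    using G \<open>w \<in> S\<close> \<open>w' \<in> S\<close> by (intro integral_norm_bound_ennreal) simp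
  also have "\<dots> \<le> (\<integral>\<^sup>+\<theta>. ennreal (K \<theta> * dist w w') \<partial>M)"
    using lipschitz_onD[OF lip \<open>w \<in> S\<close> \<open>w' \<in> S\<close>]
    by (intro nn_integral_mono ennreal_leI) (simp add: dist_norm)
  also have "\<dots> = ennreal ((\<integral>\<theta>. K \<theta> \<partial>M) * dist w w')"
    using K K_nonneg by (subst nn_integral_eq_integral) auto
  finally show "dist (\<integral>\<theta>. G w \<theta> \<partial>M) (\<integral>\<theta>. G w' \<theta> \<partial>M) \<le> (\<integral>\<theta>. K \<theta> \<partial>M) * dist w w'"
    using K_nonneg by (simp add: ennreal_le_iff Bochner_Integration.integral_nonneg)
qed

section \<open>Second moments and independence\<close>

lemma
  fixes u :: "'a \<Rightarrow> 'b::real_normed_vector"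
  assumes u[measurable]: "u \<in> borel_measurable M" and \<tau>: "\<tau> > 0"
    and exp_moment: "(\<integral>\<^sup>+x. ennreal (exp ((norm (u x))\<^sup>2 / \<tau>\<^sup>2)) \<partial>M) \<le> ennreal (exp 1)"
  shows integrable_norm_power2_of_exp_moment: "integrable M (\<lambda>x. (norm (u x))\<^sup>2)"
    and integral_norm_power2_le_of_exp_moment: "(\<integral>x. (norm (u x))\<^sup>2 \<partial>M) \<le> exp 1 * \<tau>\<^sup>2"
proof -
  have "(\<integral>\<^sup>+x. ennreal ((norm (u x))\<^sup>2) \<partial>M)
      \<le> (\<integral>\<^sup>+x. ennreal (\<tau>\<^sup>2) * ennreal (exp ((norm (u x))\<^sup>2 / \<tau>\<^sup>2)) \<partial>M)"
  proof (rule nn_integral_mono)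
    fix x
    have "(norm (u x))\<^sup>2 = \<tau>\<^sup>2 * ((norm (u x))\<^sup>2 / \<tau>\<^sup>2)" using \<tau> by simp
    also have "\<dots> \<le> \<tau>\<^sup>2 * exp ((norm (u x))\<^sup>2 / \<tau>\<^sup>2)"
      using exp_ge_add_one_self[of "(norm (u x))\<^sup>2 / \<tau>\<^sup>2"] by (intro mult_left_mono) (linarith, simp)
    finally show "ennreal ((norm (u x))\<^sup>2) \<le> ennreal (\<tau>\<^sup>2) * ennreal (exp ((norm (u x))\<^sup>2 / \<tau>\<^sup>2))"
      by (simp add: ennreal_mult[symmetric])
  qed
  also have "\<dots> = ennreal (\<tau>\<^sup>2) * (\<integral>\<^sup>+x. ennreal (exp ((norm (u x))\<^sup>2 / \<tau>\<^sup>2)) \<partial>M)"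
    by (rule nn_integral_cmult) measurable
  also have "\<dots> \<le> ennreal (exp 1 * \<tau>\<^sup>2)"
    using mult_left_mono[OF exp_moment, of "ennreal (\<tau>\<^sup>2)"] by (simp add: ennreal_mult mult.commute)
  finally have bound: "(\<integral>\<^sup>+x. ennreal ((norm (u x))\<^sup>2) \<partial>M) \<le> ennreal (exp 1 * \<tau>\<^sup>2)" .
  show int: "integrable M (\<lambda>x. (norm (u x))\<^sup>2)"
    using bound ennreal_less_top by (intro integrableI_nonneg) (auto intro: le_less_trans)
  show "(\<integral>x. (norm (u x))\<^sup>2 \<partial>M) \<le> exp 1 * \<tau>\<^sup>2"
    using bound by (simp add: nn_integral_eq_integral[OF int])
qed

lemma
  fixes K L :: "'t \<Rightarrow> real"
  assumes \<zeta>: "\<zeta> \<in> measurable P M" and law: "distr P M \<zeta> = M"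
    and K[measurable]: "K \<in> borel_measurable M"
    and K_nonneg: "\<And>\<theta>. \<theta> \<in> space M \<Longrightarrow> 0 \<le> K \<theta>" and K_le: "\<And>\<theta>. \<theta> \<in> space M \<Longrightarrow> K \<theta> \<le> L \<theta>"
    and L: "integrable P (\<lambda>\<omega>. L (\<zeta> \<omega>))"
  shows integrable_law_dominated: "integrable M K"
    and integral_law_dominated_le: "(\<integral>\<theta>. K \<theta> \<partial>M) \<le> (\<integral>\<omega>. L (\<zeta> \<omega>) \<partial>P)"
proof -
  have K_\<zeta>: "integrable P (\<lambda>\<omega>. K (\<zeta> \<omega>))"
  proof (rule Bochner_Integration.integrable_bound[OF L])
    show "(\<lambda>\<omega>. K (\<zeta> \<omega>)) \<in> borel_measurable P" using \<zeta> by measurable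
    show "AE \<omega> in P. norm (K (\<zeta> \<omega>)) \<le> norm (L (\<zeta> \<omega>))"
    proof (rule AE_I2)
      fix \<omega> assume "\<omega> \<in> space P"
      then have "\<zeta> \<omega> \<in> space M" by (rule measurable_space[OF \<zeta>])
      then show "norm (K (\<zeta> \<omega>)) \<le> norm (L (\<zeta> \<omega>))"
        using K_nonneg K_le by (simp only: real_norm_def) fastforce
    qed
  qed
  then show "integrable M K"
    using integrable_distr_eq[OF \<zeta> K] law by simp
  have "(\<integral>\<theta>. K \<theta> \<partial>M) = (\<integral>\<omega>. K (\<zeta> \<omega>) \<partial>P)"
    using integral_distr[OF \<zeta> K] law by simp
  also have "\<dots> \<le> (\<integral>\<omega>. L (\<zeta> \<omega>) \<partial>P)"
    using K_le measurable_space[OF \<zeta>] by (intro integral_mono[OF K_\<zeta> L]) auto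
  finally show "(\<integral>\<theta>. K \<theta> \<partial>M) \<le> (\<integral>\<omega>. L (\<zeta> \<omega>) \<partial>P)" .
qed

text \<open>The sort \<open>{real_inner, complete_space}\<close> of the values of \<open>G\<close> is not a subsort of
  \<open>banach\<close>, so Bochner integrals of such functions cannot be moved along a law with
  \<open>integral_distr\<close>; centering is therefore expressed through inner products with fixed vectors.\<close>

lemma integral_inner_centered_law:
  fixes f :: "'t \<Rightarrow> 'h::{real_inner, second_countable_topology}"
  assumes P: "prob_space P" and \<zeta>: "\<zeta> \<in> measurable P M" and law: "distr P M \<zeta> = M"
    and f[measurable]: "f \<in> borel_measurable M" and f_\<zeta>: "integrable P (\<lambda>\<omega>. f (\<zeta> \<omega>))"
  shows "(\<integral>\<theta>. inner a (f \<theta> - (\<integral>\<omega>. f (\<zeta> \<omega>) \<partial>P)) \<partial>M) = 0"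
proof -
  interpret P: prob_space P by fact
  define m where "m = (\<integral>\<omega>. f (\<zeta> \<omega>) \<partial>P)"
  have "(\<integral>\<theta>. inner a (f \<theta> - m) \<partial>M) = (\<integral>\<omega>. inner a (f (\<zeta> \<omega>)) - inner a m \<partial>P)"
    using integral_distr[OF \<zeta>, of "\<lambda>\<theta>. inner a (f \<theta> - m)"] law by (simp add: inner_diff_right)
  also have "\<dots> = inner a m - inner a m"
    using f_\<zeta> by (subst Bochner_Integration.integral_diff) (auto simp: m_def P.prob_space)
  finally show ?thesis by (simp add: m_def)
qed

lemma
  fixes f :: "'t \<Rightarrow> 'b::real_normed_vector"
  assumes \<zeta>: "\<zeta> \<in> measurable P M" and law: "distr P M \<zeta> = M"
    and f[measurable]: "f \<in> borel_measurable M" and \<tau>: "\<tau> > 0"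
    and exp_moment: "(\<integral>\<^sup>+\<omega>. ennreal (exp ((norm (f (\<zeta> \<omega>)))\<^sup>2 / \<tau>\<^sup>2)) \<partial>P) \<le> ennreal (exp 1)"
  shows integrable_norm_power2_law_of_exp_moment: "integrable M (\<lambda>\<theta>. (norm (f \<theta>))\<^sup>2)"
    and integral_norm_power2_law_le_of_exp_moment: "(\<integral>\<theta>. (norm (f \<theta>))\<^sup>2 \<partial>M) \<le> 3 * \<tau>\<^sup>2"
proof -
  have "(\<integral>\<^sup>+\<theta>. ennreal (exp ((norm (f \<theta>))\<^sup>2 / \<tau>\<^sup>2)) \<partial>M)
      = (\<integral>\<^sup>+\<theta>. ennreal (exp ((norm (f \<theta>))\<^sup>2 / \<tau>\<^sup>2)) \<partial>distr P M \<zeta>)"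
    by (simp only: law)
  also have "\<dots> = (\<integral>\<^sup>+\<omega>. ennreal (exp ((norm (f (\<zeta> \<omega>)))\<^sup>2 / \<tau>\<^sup>2)) \<partial>P)"
    by (rule nn_integral_distr[OF \<zeta>]) measurable
  finally have moment: "(\<integral>\<^sup>+\<theta>. ennreal (exp ((norm (f \<theta>))\<^sup>2 / \<tau>\<^sup>2)) \<partial>M) \<le> ennreal (exp 1)"
    using exp_moment by simp
  show "integrable M (\<lambda>\<theta>. (norm (f \<theta>))\<^sup>2)"
    by (rule integrable_norm_power2_of_exp_moment[OF f \<tau> moment])
  have "(\<integral>\<theta>. (norm (f \<theta>))\<^sup>2 \<partial>M) \<le> exp 1 * \<tau>\<^sup>2"
    by (rule integral_norm_power2_le_of_exp_moment[OF f \<tau> moment])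
  also have "\<dots> \<le> 3 * \<tau>\<^sup>2"
    using exp_le by (intro mult_right_mono) simp_all
  finally show "(\<integral>\<theta>. (norm (f \<theta>))\<^sup>2 \<partial>M) \<le> 3 * \<tau>\<^sup>2" .
qed

lemma (in prob_space) indep_vars_imp_indep_var:
  assumes "indep_vars (\<lambda>_. N) X I" "i \<in> I" "j \<in> I" "i \<noteq> j"
  shows "indep_var N (X i) N (X j)"
proof -
  have "indep_var (Pi\<^sub>M {i} (\<lambda>_. N)) (\<lambda>\<omega>. restrict (\<lambda>k. X k \<omega>) {i})
      (Pi\<^sub>M {j} (\<lambda>_. N)) (\<lambda>\<omega>. restrict (\<lambda>k. X k \<omega>) {j})"
    using assms by (intro indep_var_restrict) auto
  then have "indep_var N ((\<lambda>f. f i) \<circ> (\<lambda>\<omega>. restrict (\<lambda>k. X k \<omega>) {i}))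
      N ((\<lambda>f. f j) \<circ> (\<lambda>\<omega>. restrict (\<lambda>k. X k \<omega>) {j}))"
    by (rule indep_var_compose) (auto intro: measurable_component_singleton)
  then show ?thesis by (simp add: comp_def)
qed

lemma (in prob_space) integral_inner_indep_centered:
  fixes u :: "'t \<Rightarrow> 'h::{real_inner, second_countable_topology}"
  assumes N: "prob_space N"
    and X: "X \<in> measurable M N" and Y: "Y \<in> measurable M N" and ind: "indep_var N X N Y"
    and law_X: "distr M N X = N" and law_Y: "distr M N Y = N"
    and u[measurable]: "u \<in> borel_measurable N" and u_norm: "integrable N (\<lambda>x. norm (u x))"
    and centered: "\<And>a. (\<integral>x. inner a (u x) \<partial>N) = 0"
  shows "(\<integral>\<omega>. inner (u (X \<omega>)) (u (Y \<omega>)) \<partial>M) = 0"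
proof -
  interpret N: prob_space N by fact
  interpret NN: pair_prob_space N N by unfold_locales
  define h where "h z = inner (u (fst z)) (u (snd z))" for z
  define I where "I = (\<integral>\<^sup>+x. ennreal (norm (u x)) \<partial>N)"
  have "I < \<infinity>"
    using nn_integral_eq_integral[OF u_norm] by (simp add: I_def)
  have "(\<integral>\<^sup>+z. ennreal (norm (h z)) \<partial>(N \<Otimes>\<^sub>M N))
      \<le> (\<integral>\<^sup>+z. ennreal (norm (u (fst z))) * ennreal (norm (u (snd z))) \<partial>(N \<Otimes>\<^sub>M N))"
    by (rule nn_integral_mono) (simp add: h_def Cauchy_Schwarz_ineq2 flip: ennreal_mult)
  also have "\<dots> = (\<integral>\<^sup>+x. \<integral>\<^sup>+y. ennreal (norm (u x)) * ennreal (norm (u y)) \<partial>N \<partial>N)"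
    using N.nn_integral_fst[where f="\<lambda>z. ennreal (norm (u (fst z))) * ennreal (norm (u (snd z)))"]
    by simp
  also have "\<dots> = I * I"
    unfolding I_def by (simp add: nn_integral_cmult nn_integral_multc)
  also have "\<dots> < \<infinity>" using \<open>I < \<infinity>\<close> by (simp add: ennreal_mult_less_top)
  finally have h: "integrable (N \<Otimes>\<^sub>M N) h"
    unfolding integrable_iff_bounded h_def by simp
  have "(\<integral>\<omega>. inner (u (X \<omega>)) (u (Y \<omega>)) \<partial>M) = (\<integral>z. h z \<partial>distr M (N \<Otimes>\<^sub>M N) (\<lambda>\<omega>. (X \<omega>, Y \<omega>)))"
    using measurable_Pair[OF X Y] borel_measurable_integrable[OF h]
    by (subst integral_distr) (auto simp: h_def)
  also have "\<dots> = (\<integral>z. h z \<partial>(N \<Otimes>\<^sub>M N))"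
    using indep_var_distribution_eq ind law_X law_Y by metis
  also have "\<dots> = (\<integral>x. (\<integral>y. h (x, y) \<partial>N) \<partial>N)"
    using NN.integral_fst'[OF h] by simp
  also have "\<dots> = 0"
    by (simp add: h_def centered)
  finally show ?thesis .
qed

lemma
  fixes Z :: "'i \<Rightarrow> 'a \<Rightarrow> 'h::{real_inner, second_countable_topology}"
  assumes I: "finite I"
    and Z: "\<And>i. i \<in> I \<Longrightarrow> Z i \<in> borel_measurable M"
    and square: "\<And>i. i \<in> I \<Longrightarrow> integrable M (\<lambda>x. (norm (Z i x))\<^sup>2)"
    and orthogonal: "\<And>i j. i \<in> I \<Longrightarrow> j \<in> I \<Longrightarrow> i \<noteq> j \<Longrightarrow> (\<integral>x. inner (Z i x) (Z j x) \<partial>M) = 0"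
  shows integrable_norm_sum_power2: "integrable M (\<lambda>x. (norm (\<Sum>i\<in>I. Z i x))\<^sup>2)"
    and integral_norm_sum_power2_orthogonal:
      "(\<integral>x. (norm (\<Sum>i\<in>I. Z i x))\<^sup>2 \<partial>M) = (\<Sum>i\<in>I. \<integral>x. (norm (Z i x))\<^sup>2 \<partial>M)"
proof -
  have expand: "(norm (\<Sum>i\<in>I. Z i x))\<^sup>2 = (\<Sum>i\<in>I. \<Sum>j\<in>I. inner (Z i x) (Z j x))" for x
    by (simp only: power2_norm_eq_inner inner_sum_left) (simp only: inner_sum_right)
  have inner_int: "integrable M (\<lambda>x. inner (Z i x) (Z j x))" if "i \<in> I" "j \<in> I" for i j
  proof (rule Bochner_Integration.integrable_bound)
    show "integrable M (\<lambda>x. (norm (Z i x))\<^sup>2 + (norm (Z j x))\<^sup>2)"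
      using square that by simp
    show "(\<lambda>x. inner (Z i x) (Z j x)) \<in> borel_measurable M"
      using Z that by (simp add: borel_measurable_inner)
    have "norm (inner (Z i x) (Z j x)) \<le> (norm (Z i x))\<^sup>2 + (norm (Z j x))\<^sup>2" for x
      using Cauchy_Schwarz_ineq2[of "Z i x" "Z j x"] sum_squares_bound[of "norm (Z i x)" "norm (Z j x)"]
      by simp
    then show "AE x in M. norm (inner (Z i x) (Z j x)) \<le> norm ((norm (Z i x))\<^sup>2 + (norm (Z j x))\<^sup>2)"
      by simp
  qed
  show "integrable M (\<lambda>x. (norm (\<Sum>i\<in>I. Z i x))\<^sup>2)"
    unfolding expand using inner_int by simp
  have "(\<integral>x. (norm (\<Sum>i\<in>I. Z i x))\<^sup>2 \<partial>M) = (\<Sum>i\<in>I. \<Sum>j\<in>I. \<integral>x. inner (Z i x) (Z j x) \<partial>M)"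
    unfolding expand using inner_int by (simp add: Bochner_Integration.integral_sum)
  also have "\<dots> = (\<Sum>i\<in>I. \<Sum>j\<in>I. if j = i then \<integral>x. (norm (Z i x))\<^sup>2 \<partial>M else 0)"
    by (intro sum.cong refl) (simp add: orthogonal power2_norm_eq_inner)
  also have "\<dots> = (\<Sum>i\<in>I. \<integral>x. (norm (Z i x))\<^sup>2 \<partial>M)"
    using I by simp
  finally show "(\<integral>x. (norm (\<Sum>i\<in>I. Z i x))\<^sup>2 \<partial>M) = (\<Sum>i\<in>I. \<integral>x. (norm (Z i x))\<^sup>2 \<partial>M)" .
qed

lemma (in prob_space) nn_integral_SUP_le_sqrt_card:
  fixes Y :: "'i \<Rightarrow> 'a \<Rightarrow> real"
  assumes I: "finite I" and \<sigma>: "\<sigma> > 0"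
    and square: "\<And>i. i \<in> I \<Longrightarrow> integrable M (\<lambda>x. (Y i x)\<^sup>2)"
    and second_moment: "\<And>i. i \<in> I \<Longrightarrow> (\<integral>x. (Y i x)\<^sup>2 \<partial>M) \<le> \<sigma>\<^sup>2"
  shows "(\<integral>\<^sup>+x. (SUP i\<in>I. ennreal (Y i x)) \<partial>M) \<le> ennreal (sqrt (card I) * \<sigma>)"
proof (cases "I = {}")
  case False
  define s where "s = sqrt (card I) * \<sigma>"
  have s: "s > 0" using False I \<sigma> by (simp add: s_def card_gt_0_iff)
  define R where "R x = ((\<Sum>i\<in>I. (Y i x)\<^sup>2) + s\<^sup>2) / (2 * s)" for x
  have Y_le: "Y i x \<le> R x" if "i \<in> I" for i x
  proof -
    have "2 * s * Y i x \<le> s\<^sup>2 + (Y i x)\<^sup>2" by (rule sum_squares_bound)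
    also have "(Y i x)\<^sup>2 \<le> (\<Sum>j\<in>I. (Y j x)\<^sup>2)" using I that by (intro member_le_sum) auto
    finally show ?thesis using s unfolding R_def by (simp add: field_simps)
  qed
  have R: "integrable M R" unfolding R_def using square by simp
  have "(\<integral>x. R x \<partial>M) = ((\<Sum>i\<in>I. \<integral>x. (Y i x)\<^sup>2 \<partial>M) + s\<^sup>2) / (2 * s)"
    unfolding R_def using square by (simp add: Bochner_Integration.integral_sum prob_space)
  also have "\<dots> \<le> (card I * \<sigma>\<^sup>2 + s\<^sup>2) / (2 * s)"
    using s sum_mono[OF second_moment] by (intro divide_right_mono add_right_mono) auto
  also have "\<dots> = s"
  proof -
    have "card I * \<sigma>\<^sup>2 = s\<^sup>2" by (simp add: s_def power_mult_distrib)
    then show ?thesis using s by (simp add: power2_eq_square)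
  qed
  finally have "(\<integral>x. R x \<partial>M) \<le> s" .
  have "(\<integral>\<^sup>+x. (SUP i\<in>I. ennreal (Y i x)) \<partial>M) \<le> (\<integral>\<^sup>+x. ennreal (R x) \<partial>M)"
    by (intro nn_integral_mono SUP_least ennreal_leI Y_le)
  also have "\<dots> = ennreal (\<integral>x. R x \<partial>M)"
    using R s unfolding R_def
    by (intro nn_integral_eq_integral) (auto intro!: AE_I2 divide_nonneg_pos add_nonneg_nonneg sum_nonneg)
  also have "\<dots> \<le> ennreal s"
    using \<open>(\<integral>x. R x \<partial>M) \<le> s\<close> by (rule ennreal_leI)
  finally show ?thesis unfolding s_def .
qed (simp add: bot_ennreal)

section \<open>Independent identically distributed samples\<close>

locale iid_sequence = P: prob_space P + M: prob_space M
  for P :: "'o measure" and M :: "'t measure" and X :: "nat \<Rightarrow> 'o \<Rightarrow> 't" +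
  assumes measurable_X[measurable]: "\<And>i. X i \<in> measurable P M"
    and distr_X: "\<And>i. distr P M (X i) = M"
    and indep_X: "P.indep_vars (\<lambda>_. M) X {1..}"
begin

definition sample_mean :: "nat \<Rightarrow> ('t \<Rightarrow> 'b::real_normed_vector) \<Rightarrow> 'o \<Rightarrow> 'b"
  where "sample_mean N f \<omega> = (\<Sum>i=1..N. f (X i \<omega>)) /\<^sub>R real N"

lemma measurable_sample_mean[measurable]:
  fixes f :: "'t \<Rightarrow> 'b::{real_normed_vector, second_countable_topology}"
  assumes [measurable]: "f \<in> borel_measurable M"
  shows "sample_mean N f \<in> borel_measurable P"
  unfolding sample_mean_def[abs_def] by measurable

lemma
  fixes f :: "'t \<Rightarrow> 'b::{banach, second_countable_topology}"
  assumes "f \<in> borel_measurable M"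
  shows integrable_sample_iff: "integrable P (\<lambda>\<omega>. f (X i \<omega>)) \<longleftrightarrow> integrable M f"
    and integral_sample: "(\<integral>\<omega>. f (X i \<omega>) \<partial>P) = (\<integral>\<theta>. f \<theta> \<partial>M)"
  using integrable_distr_eq[OF measurable_X assms] integral_distr[OF measurable_X assms]
  by (simp_all add: distr_X)

lemma
  fixes f :: "'t \<Rightarrow> real"
  assumes f: "integrable M f" and N: "N > 0"
  shows integrable_sample_mean: "integrable P (sample_mean N f)"
    and integral_sample_mean: "(\<integral>\<omega>. sample_mean N f \<omega> \<partial>P) = (\<integral>\<theta>. f \<theta> \<partial>M)"
proof -
  have "integrable P (\<lambda>\<omega>. f (X i \<omega>))" for i
    using f by (simp add: integrable_sample_iff)
  then show "integrable P (sample_mean N f)"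
    unfolding sample_mean_def[abs_def] by simp
  show "(\<integral>\<omega>. sample_mean N f \<omega> \<partial>P) = (\<integral>\<theta>. f \<theta> \<partial>M)"
    using f N unfolding sample_mean_def
    by (simp add: integrable_sample_iff integral_sample Bochner_Integration.integral_sum)
qed

lemma lipschitz_on_sample_mean:
  assumes "\<And>\<theta>. \<theta> \<in> space M \<Longrightarrow> (K \<theta>)-lipschitz_on S (\<lambda>w. G w \<theta>)" and "\<omega> \<in> space P"
  shows "(sample_mean N K \<omega>)-lipschitz_on S (\<lambda>w. sample_mean N (G w) \<omega>)"
proof -
  have "(\<Sum>i=1..N. K (X i \<omega>))-lipschitz_on S (\<lambda>w. \<Sum>i=1..N. G w (X i \<omega>))"
    using assms measurable_space[OF measurable_X] by (intro lipschitz_on_sum) auto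
  then have "(inverse (real N) * (\<Sum>i=1..N. K (X i \<omega>)))-lipschitz_on S
      (\<lambda>w. inverse (real N) *\<^sub>R (\<Sum>i=1..N. G w (X i \<omega>)))"
    by (rule lipschitz_on_cmult_nonneg) simp
  then show ?thesis
    unfolding sample_mean_def by (simp add: divide_inverse_commute)
qed

lemma
  fixes f :: "'t \<Rightarrow> 'h::{real_inner, second_countable_topology}"
  assumes f[measurable]: "f \<in> borel_measurable M"
    and square: "integrable M (\<lambda>\<theta>. (norm (f \<theta> - m))\<^sup>2)"
    and centered: "\<And>a. (\<integral>\<theta>. inner a (f \<theta> - m) \<partial>M) = 0"
    and N: "N > 0"
  shows integrable_sample_mean_deviation: "integrable P (\<lambda>\<omega>. (dist m (sample_mean N f \<omega>))\<^sup>2)"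
    and integral_sample_mean_deviation:
      "(\<integral>\<omega>. (dist m (sample_mean N f \<omega>))\<^sup>2 \<partial>P) = (\<integral>\<theta>. (norm (f \<theta> - m))\<^sup>2 \<partial>M) / N"
proof -
  define u where "u \<theta> = f \<theta> - m" for \<theta>
  define Z where "Z i \<omega> = u (X i \<omega>)" for i \<omega>
  have u[measurable]: "u \<in> borel_measurable M" unfolding u_def by measurable
  have u_square[measurable]: "(\<lambda>\<theta>. (norm (u \<theta>))\<^sup>2) \<in> borel_measurable M" by measurable
  have u_norm: "integrable M (\<lambda>\<theta>. norm (u \<theta>))"
  proof (rule M.square_integrable_imp_integrable)
    show "(\<lambda>\<theta>. norm (u \<theta>)) \<in> borel_measurable M" by measurable
    show "integrable M (\<lambda>\<theta>. (norm (u \<theta>))\<^sup>2)" using square by (simp add: u_def)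
  qed
  have Z[measurable]: "Z i \<in> borel_measurable P" for i unfolding Z_def by measurable
  have Z_square: "integrable P (\<lambda>\<omega>. (norm (Z i \<omega>))\<^sup>2)" for i
    unfolding Z_def integrable_sample_iff[OF u_square] using square by (simp add: u_def)
  have Z_variance: "(\<integral>\<omega>. (norm (Z i \<omega>))\<^sup>2 \<partial>P) = (\<integral>\<theta>. (norm (u \<theta>))\<^sup>2 \<partial>M)" for i
    unfolding Z_def by (rule integral_sample[OF u_square])
  have orthogonal: "(\<integral>\<omega>. inner (Z i \<omega>) (Z j \<omega>) \<partial>P) = 0"
    if "i \<in> {1..N}" "j \<in> {1..N}" "i \<noteq> j" for i j
    unfolding Z_def
  proof (rule P.integral_inner_indep_centered[OF M.prob_space_axioms measurable_X measurable_X
        _ distr_X distr_X u u_norm])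
    show "P.indep_var M (X i) M (X j)"
      using that by (intro P.indep_vars_imp_indep_var[OF indep_X]) auto
    show "(\<integral>\<theta>. inner a (u \<theta>) \<partial>M) = 0" for a
      unfolding u_def by (rule centered)
  qed
  have dist_eq: "dist m (sample_mean N f \<omega>) = norm (\<Sum>i\<in>{1..N}. Z i \<omega>) / N" for \<omega>
  proof -
    have "(\<Sum>i\<in>{1..N}. Z i \<omega>) = (\<Sum>i=1..N. f (X i \<omega>)) - real N *\<^sub>R m"
      unfolding Z_def u_def by (simp add: sum_subtractf sum_constant_scaleR)
    then have "m - sample_mean N f \<omega> = - ((\<Sum>i\<in>{1..N}. Z i \<omega>) /\<^sub>R real N)"
      using N unfolding sample_mean_def by (simp add: scaleR_diff_right)
    then show ?thesis
      by (simp add: dist_norm divide_inverse_commute)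
  qed
  have sum_square: "integrable P (\<lambda>\<omega>. (norm (\<Sum>i\<in>{1..N}. Z i \<omega>))\<^sup>2)"
    by (rule integrable_norm_sum_power2[OF finite_atLeastAtMost Z Z_square orthogonal])
  have dist_square: "(dist m (sample_mean N f \<omega>))\<^sup>2 = (norm (\<Sum>i\<in>{1..N}. Z i \<omega>))\<^sup>2 / (real N)\<^sup>2" for \<omega>
    unfolding dist_eq by (rule power_divide)
  show "integrable P (\<lambda>\<omega>. (dist m (sample_mean N f \<omega>))\<^sup>2)"
    unfolding dist_square using sum_square by (rule integrable_divide_zero)
  have "(\<integral>\<omega>. (norm (\<Sum>i\<in>{1..N}. Z i \<omega>))\<^sup>2 \<partial>P) = (\<Sum>i\<in>{1..N}. \<integral>\<omega>. (norm (Z i \<omega>))\<^sup>2 \<partial>P)"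
    by (rule integral_norm_sum_power2_orthogonal[OF finite_atLeastAtMost Z Z_square orthogonal])
  also have "\<dots> = N * (\<integral>\<theta>. (norm (u \<theta>))\<^sup>2 \<partial>M)"
    by (simp add: Z_variance)
  finally show "(\<integral>\<omega>. (dist m (sample_mean N f \<omega>))\<^sup>2 \<partial>P) = (\<integral>\<theta>. (norm (f \<theta> - m))\<^sup>2 \<partial>M) / N"
    using N unfolding dist_square u_def by (simp add: power2_eq_square)
qed

lemma dist_sample_mean_le_net:
  assumes G_lip: "\<And>\<theta>. \<theta> \<in> space M \<Longrightarrow> (K \<theta>)-lipschitz_on S (\<lambda>w. G w \<theta>)"
    and g_lip: "L-lipschitz_on S g"
    and "\<omega> \<in> space P" "w \<in> S" "c \<in> S" "dist c w \<le> \<nu>"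
  shows "dist (g w) (sample_mean N (G w) \<omega>)
    \<le> L * \<nu> + \<nu> * sample_mean N K \<omega> + dist (g c) (sample_mean N (G c) \<omega>)"
  using dist_le_lipschitz_on_net[OF g_lip lipschitz_on_sample_mean[OF G_lip \<open>\<omega> \<in> space P\<close>] assms(4-6)]
  by (simp add: mult.commute)

lemma nn_integral_SUP_sample_mean_deviation_le:
  fixes G :: "'w \<Rightarrow> 't \<Rightarrow> 'h::{real_inner, second_countable_topology}" and g :: "'w \<Rightarrow> 'h"
  assumes C: "finite C"
    and G_meas: "\<And>c. c \<in> C \<Longrightarrow> G c \<in> borel_measurable M"
    and centered: "\<And>c a. c \<in> C \<Longrightarrow> (\<integral>\<theta>. inner a (G c \<theta> - g c) \<partial>M) = 0"
    and square: "\<And>c. c \<in> C \<Longrightarrow> integrable M (\<lambda>\<theta>. (norm (G c \<theta> - g c))\<^sup>2)"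
    and variance: "\<And>c. c \<in> C \<Longrightarrow> (\<integral>\<theta>. (norm (G c \<theta> - g c))\<^sup>2 \<partial>M) \<le> \<sigma>\<^sup>2"
    and \<sigma>: "\<sigma> > 0" and N: "N > 0"
  shows "(\<integral>\<^sup>+\<omega>. (SUP c\<in>C. ennreal (dist (g c) (sample_mean N (G c) \<omega>))) \<partial>P)
    \<le> ennreal (sqrt (card C) * (\<sigma> / sqrt N))"
proof (rule P.nn_integral_SUP_le_sqrt_card[OF C])
  show "\<sigma> / sqrt N > 0" using \<sigma> N by simp
  fix c assume c: "c \<in> C"
  show "integrable P (\<lambda>\<omega>. (dist (g c) (sample_mean N (G c) \<omega>))\<^sup>2)"
    by (rule integrable_sample_mean_deviation[OF G_meas[OF c] square[OF c] centered[OF c] N])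
  have "(\<integral>\<omega>. (dist (g c) (sample_mean N (G c) \<omega>))\<^sup>2 \<partial>P) = (\<integral>\<theta>. (norm (G c \<theta> - g c))\<^sup>2 \<partial>M) / N"
    by (rule integral_sample_mean_deviation[OF G_meas[OF c] square[OF c] centered[OF c] N])
  also have "\<dots> \<le> \<sigma>\<^sup>2 / N"
    using variance[OF c] by (simp add: divide_right_mono)
  finally show "(\<integral>\<omega>. (dist (g c) (sample_mean N (G c) \<omega>))\<^sup>2 \<partial>P) \<le> (\<sigma> / sqrt N)\<^sup>2"
    by (simp add: power_divide)
qed

lemma uniform_deviation_le:
  fixes G :: "'w::metric_space \<Rightarrow> 't \<Rightarrow> 'h::{real_inner, second_countable_topology}"
    and g :: "'w \<Rightarrow> 'h" and K :: "'t \<Rightarrow> real"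
  assumes S: "compact (closure S)"
    and G_meas: "\<And>w. w \<in> S \<Longrightarrow> G w \<in> borel_measurable M"
    and K: "integrable M K"
    and G_lip: "\<And>\<theta>. \<theta> \<in> space M \<Longrightarrow> (K \<theta>)-lipschitz_on S (\<lambda>w. G w \<theta>)"
    and g_lip: "(\<integral>\<theta>. K \<theta> \<partial>M)-lipschitz_on S g"
    and centered: "\<And>w a. w \<in> S \<Longrightarrow> (\<integral>\<theta>. inner a (G w \<theta> - g w) \<partial>M) = 0"
    and square: "\<And>w. w \<in> S \<Longrightarrow> integrable M (\<lambda>\<theta>. (norm (G w \<theta> - g w))\<^sup>2)"
    and variance: "\<And>w. w \<in> S \<Longrightarrow> (\<integral>\<theta>. (norm (G w \<theta> - g w))\<^sup>2 \<partial>M) \<le> \<sigma>\<^sup>2"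
    and \<sigma>: "\<sigma> > 0" and \<nu>: "\<nu> > 0" and N: "N > 0"
  shows "(\<integral>\<^sup>+\<omega>. (SUP w\<in>S. ennreal (dist (g w) (sample_mean N (G w) \<omega>))) \<partial>P)
    \<le> ennreal (2 * (\<integral>\<theta>. K \<theta> \<partial>M) * \<nu> + sqrt (covering_number \<nu> S) * \<sigma> / sqrt N)"
proof -
  define L where "L = (\<integral>\<theta>. K \<theta> \<partial>M)"
  define D where "D c \<omega> = dist (g c) (sample_mean N (G c) \<omega>)" for c \<omega>
  define A where "A \<omega> = L * \<nu> + \<nu> * sample_mean N K \<omega>" for \<omega>
  obtain C where C: "finite C" "C \<subseteq> S" "card C = covering_number \<nu> S"
    "S \<subseteq> (\<Union>c\<in>C. cball c \<nu>)"
    using covering_net_of_compact_closure[OF S \<nu>] .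
  have A_nonneg: "0 \<le> A \<omega>" if "\<omega> \<in> space P" for \<omega>
    using lipschitz_on_nonneg[OF g_lip] lipschitz_on_nonneg[OF lipschitz_on_sample_mean[OF G_lip that]] \<nu>
    by (simp add: A_def L_def)
  have A_int: "integrable P A" and A_integral: "(\<integral>\<omega>. A \<omega> \<partial>P) = 2 * L * \<nu>"
    using integrable_sample_mean[OF K N] integral_sample_mean[OF K N]
    by (simp_all add: A_def[abs_def] L_def P.prob_space)
  have pointwise: "ennreal (D w \<omega>) \<le> ennreal (A \<omega>) + (SUP c\<in>C. ennreal (D c \<omega>))"
    if "\<omega> \<in> space P" "w \<in> S" for \<omega> w
  proof -
    obtain c where c: "c \<in> C" "dist c w \<le> \<nu>"
      using C(4) \<open>w \<in> S\<close> by auto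
    then have "c \<in> S" using C(2) by auto
    have "D w \<omega> \<le> A \<omega> + D c \<omega>"
      unfolding D_def A_def L_def
      by (rule dist_sample_mean_le_net[OF G_lip g_lip that \<open>c \<in> S\<close> c(2)])
    then have "ennreal (D w \<omega>) \<le> ennreal (A \<omega>) + ennreal (D c \<omega>)"
      using A_nonneg[OF that(1)] by (simp add: D_def flip: ennreal_plus)
    also have "\<dots> \<le> ennreal (A \<omega>) + (SUP c\<in>C. ennreal (D c \<omega>))"
      using c(1) by (intro add_left_mono SUP_upper)
    finally show ?thesis .
  qed
  have D_meas: "(\<lambda>\<omega>. SUP c\<in>C. ennreal (D c \<omega>)) \<in> borel_measurable P"
  proof (rule borel_measurable_SUP)
    show "countable C" using C(1) by (rule countable_finite)
    fix c assume "c \<in> C"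
    then have [measurable]: "G c \<in> borel_measurable M" using C(2) G_meas by auto
    show "(\<lambda>\<omega>. ennreal (D c \<omega>)) \<in> borel_measurable P" unfolding D_def by measurable
  qed
  have "(\<integral>\<^sup>+\<omega>. (SUP w\<in>S. ennreal (D w \<omega>)) \<partial>P)
      \<le> (\<integral>\<^sup>+\<omega>. ennreal (A \<omega>) + (SUP c\<in>C. ennreal (D c \<omega>)) \<partial>P)"
    using pointwise by (intro nn_integral_mono SUP_least) auto
  also have "\<dots> = (\<integral>\<^sup>+\<omega>. ennreal (A \<omega>) \<partial>P) + (\<integral>\<^sup>+\<omega>. (SUP c\<in>C. ennreal (D c \<omega>)) \<partial>P)"
    using A_int D_meas by (intro nn_integral_add) auto
  also have "\<dots> \<le> ennreal (2 * L * \<nu>) + ennreal (sqrt (card C) * (\<sigma> / sqrt N))"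
    unfolding D_def using C(1,2) A_int A_nonneg
    by (intro add_mono nn_integral_SUP_sample_mean_deviation_le[OF _ G_meas centered square variance \<sigma> N])
      (auto simp: nn_integral_eq_integral A_integral)
  also have "\<dots> = ennreal (2 * L * \<nu> + sqrt (covering_number \<nu> S) * \<sigma> / sqrt N)"
    using C(3) \<sigma> \<nu> lipschitz_on_nonneg[OF g_lip] by (simp add: L_def ennreal_plus)
  finally show ?thesis unfolding D_def L_def .
qed

lemma uniform_deviation_le_subgaussian:
  fixes \<zeta> :: "'o \<Rightarrow> 't" and S :: "'w::metric_space set"
    and G :: "'w \<Rightarrow> 't \<Rightarrow> 'h::{real_inner, second_countable_topology}" and LG :: "'t \<Rightarrow> real"
  assumes \<zeta>: "\<zeta> \<in> measurable P M" and law: "distr P M \<zeta> = M"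
    and S: "compact (closure S)"
    and G_cont: "\<And>\<theta>. \<theta> \<in> space M \<Longrightarrow> continuous_on S (\<lambda>w. G w \<theta>)"
    and G_meas: "\<And>w. w \<in> S \<Longrightarrow> G w \<in> borel_measurable M"
    and G_lip: "\<And>\<theta>. \<theta> \<in> space M \<Longrightarrow> (LG \<theta>)-lipschitz_on S (\<lambda>w. G w \<theta>)"
    and LG_int: "integrable P (\<lambda>\<omega>. LG (\<zeta> \<omega>))"
    and G_int: "\<And>w. w \<in> S \<Longrightarrow> integrable P (\<lambda>\<omega>. G w (\<zeta> \<omega>))"
    and \<tau>: "\<tau> > 0"
    and subgaussian: "\<And>w. w \<in> S \<Longrightarrow>
      (\<integral>\<^sup>+\<omega>. ennreal (exp ((norm (G w (\<zeta> \<omega>) - (\<integral>\<omega>'. G w (\<zeta> \<omega>') \<partial>P)))\<^sup>2 / \<tau>\<^sup>2)) \<partial>P) \<le> ennreal (exp 1)"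
    and \<nu>: "\<nu> > 0" and N: "N > 0"
  shows "(\<integral>\<^sup>+\<omega>. (SUP w\<in>S. ennreal (dist (\<integral>\<omega>'. G w (\<zeta> \<omega>') \<partial>P) (sample_mean N (G w) \<omega>))) \<partial>P)
    \<le> ennreal (2 * (\<integral>\<omega>. LG (\<zeta> \<omega>) \<partial>P) * \<nu> + sqrt 3 * \<tau> / sqrt N * sqrt (covering_number \<nu> S))"
proof -
  define g where "g w = (\<integral>\<omega>. G w (\<zeta> \<omega>) \<partial>P)" for w
  obtain K where K[measurable]: "K \<in> borel_measurable M" and K_le: "\<And>\<theta>. \<theta> \<in> space M \<Longrightarrow> K \<theta> \<le> LG \<theta>"
    and K_lip: "\<And>\<theta>. \<theta> \<in> space M \<Longrightarrow> (K \<theta>)-lipschitz_on S (\<lambda>w. G w \<theta>)"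
    using measurable_lipschitz_modulus[OF S G_cont G_meas G_lip] by blast
  note K_nonneg = lipschitz_on_nonneg[OF K_lip]
  have K_int: "integrable M K" and K_integral: "(\<integral>\<theta>. K \<theta> \<partial>M) \<le> (\<integral>\<omega>. LG (\<zeta> \<omega>) \<partial>P)"
    using integrable_law_dominated[OF \<zeta> law K K_nonneg K_le LG_int]
      integral_law_dominated_le[OF \<zeta> law K K_nonneg K_le LG_int] by blast+
  have "(\<integral>\<omega>. K (\<zeta> \<omega>) \<partial>P)-lipschitz_on S g"
    unfolding g_def
  proof (rule lipschitz_on_integral)
    show "(K (\<zeta> \<omega>))-lipschitz_on S (\<lambda>w. G w (\<zeta> \<omega>))" if "\<omega> \<in> space P" for \<omega>
      using that by (rule K_lip[OF measurable_space[OF \<zeta>]])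
    show "integrable P (\<lambda>\<omega>. K (\<zeta> \<omega>))"
      using K_int integrable_distr_eq[OF \<zeta> K] law by simp
  qed (rule G_int)
  then have g_lip: "(\<integral>\<theta>. K \<theta> \<partial>M)-lipschitz_on S g"
    using integral_distr[OF \<zeta> K] law by simp
  have square: "integrable M (\<lambda>\<theta>. (norm (G w \<theta> - g w))\<^sup>2)"
    and variance: "(\<integral>\<theta>. (norm (G w \<theta> - g w))\<^sup>2 \<partial>M) \<le> (sqrt 3 * \<tau>)\<^sup>2" if "w \<in> S" for w
    using integrable_norm_power2_law_of_exp_moment[where f="\<lambda>\<theta>. G w \<theta> - g w", OF \<zeta> law _ \<tau>]
      integral_norm_power2_law_le_of_exp_moment[where f="\<lambda>\<theta>. G w \<theta> - g w", OF \<zeta> law _ \<tau>]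
      G_meas[OF that] subgaussian[OF that, folded g_def]
    by (simp_all add: power_mult_distrib)
  have "(\<integral>\<^sup>+\<omega>. (SUP w\<in>S. ennreal (dist (g w) (sample_mean N (G w) \<omega>))) \<partial>P)
      \<le> ennreal (2 * (\<integral>\<theta>. K \<theta> \<partial>M) * \<nu> + sqrt (covering_number \<nu> S) * (sqrt 3 * \<tau>) / sqrt N)"
  proof (rule uniform_deviation_le[OF S G_meas K_int K_lip g_lip _ square variance _ \<nu> N])
    show "(\<integral>\<theta>. inner a (G w \<theta> - g w) \<partial>M) = 0" if "w \<in> S" for w a
      unfolding g_def using G_meas[OF that] G_int[OF that]
      by (rule integral_inner_centered_law[OF P.prob_space_axioms \<zeta> law])
  qed (use \<tau> in \<open>auto intro: mult_pos_pos\<close>)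
  also have "\<dots> \<le> ennreal (2 * (\<integral>\<omega>. LG (\<zeta> \<omega>) \<partial>P) * \<nu> + sqrt 3 * \<tau> / sqrt N * sqrt (covering_number \<nu> S))"
    using K_integral \<nu> by (intro ennreal_leI add_mono mult_right_mono) (simp_all add: ac_simps)
  finally show ?thesis unfolding g_def .
qed

end


theorem propositionA2:
  fixes \<mu> :: "'t measure"
    and P :: "'o measure"
    and \<zeta> :: "'o \<Rightarrow> 't"
    and \<zeta>s :: "nat \<Rightarrow> 'o \<Rightarrow> 't"
    and V0 :: "'v::banach set"
    and B :: "'v \<Rightarrow> 'w::banach"
    and G :: "'w \<Rightarrow> 't \<Rightarrow> 'h::{real_inner, complete_space, second_countable_topology}"
    and LG :: "'t \<Rightarrow> real"
    and \<tau> \<nu> :: real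
    and N :: nat
  assumes mu: "prob_space \<mu>" "complete_measure \<mu>"
    and P: "prob_space P" "complete_measure P"
    and zeta: "\<zeta> \<in> measurable P \<mu>"
    and zetas: "\<And>i. \<zeta>s i \<in> measurable P \<mu>"
    and zeta_law: "distr P \<mu> \<zeta> = \<mu>"
    and zetas_dist: "\<And>i. distr P \<mu> (\<zeta>s i) = distr P \<mu> \<zeta>"
    and zetas_indep: "prob_space.indep_vars P (\<lambda>_. \<mu>) \<zeta>s {1..}"
    and refl: "reflexive_space TYPE('v)"
    and V0: "V0 \<noteq> {}" "closed V0" "bounded V0" "convex V0"
    and B: "compact_linear_op B"
    and G_cont: "\<And>\<theta>. \<theta> \<in> space \<mu> \<Longrightarrow> continuous_on (B ` V0) (\<lambda>w. G w \<theta>)"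
    and G_meas: "\<And>w. w \<in> B ` V0 \<Longrightarrow> (\<lambda>\<theta>. G w \<theta>) \<in> borel_measurable \<mu>"
    and LG_nonneg: "\<And>\<theta>. \<theta> \<in> space \<mu> \<Longrightarrow> 0 \<le> LG \<theta>"
    and LG_int: "integrable P (\<lambda>\<omega>. LG (\<zeta> \<omega>))"
    and G_lip: "\<And>\<theta> w w'. \<theta> \<in> space \<mu> \<Longrightarrow> w \<in> B ` V0 \<Longrightarrow> w' \<in> B ` V0 \<Longrightarrow>
                  norm (G w \<theta> - G w' \<theta>) \<le> LG \<theta> * norm (w - w')"
    and G_int: "\<And>w. w \<in> B ` V0 \<Longrightarrow> integrable P (\<lambda>\<omega>. G w (\<zeta> \<omega>))"
    and tau: "\<tau> > 0"
    and G_subgauss: "\<And>w. w \<in> B ` V0 \<Longrightarrow>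
          (\<integral>\<^sup>+ \<omega>. ennreal (exp ((norm (G w (\<zeta> \<omega>) - (\<integral>\<omega>'. G w (\<zeta> \<omega>') \<partial>P)))\<^sup>2 / \<tau>\<^sup>2)) \<partial>P)
            \<le> ennreal (exp 1)"
    and nu: "\<nu> > 0"
    and N: "N > 0"
  shows "(\<integral>\<^sup>+ \<omega>. (SUP v\<in>V0. ennreal (norm ((\<integral>\<omega>'. G (B v) (\<zeta> \<omega>') \<partial>P)
                       - (\<Sum>i=1..N. G (B v) (\<zeta>s i \<omega>)) /\<^sub>R real N))) \<partial>P)
       = (\<integral>\<^sup>+ \<omega>. (SUP w\<in>B ` V0. ennreal (norm ((\<integral>\<omega>'. G w (\<zeta> \<omega>') \<partial>P)
                       - (\<Sum>i=1..N. G w (\<zeta>s i \<omega>)) /\<^sub>R real N))) \<partial>P)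
     \<and> (\<integral>\<^sup>+ \<omega>. (SUP w\<in>B ` V0. ennreal (norm ((\<integral>\<omega>'. G w (\<zeta> \<omega>') \<partial>P)
                       - (\<Sum>i=1..N. G w (\<zeta>s i \<omega>)) /\<^sub>R real N))) \<partial>P)
       \<le> ennreal (2 * (\<integral>\<omega>. LG (\<zeta> \<omega>) \<partial>P) * \<nu>
                  + sqrt 3 * \<tau> / sqrt (real N) * sqrt (real (covering_number \<nu> (B ` V0))))"
proof -
  have law: "\<And>i. distr P \<mu> (\<zeta>s i) = \<mu>" using zetas_dist zeta_law by simp
  interpret iid_sequence P \<mu> \<zeta>s
    by (intro iid_sequence.intro iid_sequence_axioms.intro P(1) mu(1) zetas law zetas_indep)
  have S: "compact (closure (B ` V0))"
    using B V0(3) by (rule compact_closure_image_compact_linear_op)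
  have lip: "(LG \<theta>)-lipschitz_on (B ` V0) (\<lambda>w. G w \<theta>)" if "\<theta> \<in> space \<mu>" for \<theta>
    using G_lip[OF that] LG_nonneg[OF that] by (intro lipschitz_onI) (simp_all add: dist_norm)
  have "(\<integral>\<^sup>+ \<omega>. (SUP w\<in>B ` V0. ennreal (norm ((\<integral>\<omega>'. G w (\<zeta> \<omega>') \<partial>P)
                       - (\<Sum>i=1..N. G w (\<zeta>s i \<omega>)) /\<^sub>R real N))) \<partial>P)
       \<le> ennreal (2 * (\<integral>\<omega>. LG (\<zeta> \<omega>) \<partial>P) * \<nu>
                  + sqrt 3 * \<tau> / sqrt (real N) * sqrt (real (covering_number \<nu> (B ` V0))))"
    using uniform_deviation_le_subgaussian[OF zeta zeta_law S G_cont G_meas lip LG_int G_int tau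
        G_subgauss nu N]
    unfolding sample_mean_def dist_norm .
  then show ?thesis by (simp only: image_image simp_thms)
qed

end
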